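(* Let $n,m,t,\ell$ be positive integers with $\ell\le t$, let $\sigma\in\mathcal{S}_n$, and let $i_1,\ldots,i_\ell\in[n]$ be distinct positions such that $\sigma(i_j)>m$ for all $j\in[\ell]$ and $\sigma(i_j)\le\sigma(i_{j+1})-2$ for $j\in[\ell-1]$. Define $\sigma_e\in[n]^n$ by $\sigma_e(i)=\sigma(i)-1$ for $i\in\{i_1,\ldots,i_\ell\}$ and $\sigma_e(i)=\sigma(i)$ otherwise. For each $j\in[\ell]$ let $i'_j$ be the position with $\sigma(i'_j)=\sigma(i_j)-1$, so that $\sigma_e(i_j)=\sigma_e(i'_j)=\sigma(i_j)-1$ are repeated values of $\sigma_e$. Then for every $i\in[n]$, $$\mathcal{L}(\sigma_e)(i)=\begin{cases}\mathcal{L}(\sigma)(i)-1,&\text{if } i=i'_j \text{ and } i'_j>i_j \text{ for some } j\in[\ell],\\ \mathcal{L}(\sigma)(i),&\text{otherwise.}\end{cases}$$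
   Context: $[n]=\{1,\ldots,n\}$ and $\mathcal{S}_n$ is the set of permutations of $[n]$, written as sequences $(\sigma(1),\ldots,\sigma(n))$. For any sequence $\pi\in[n]^n$, its Lehmer encoding $\mathcal{L}(\pi)$ is the sequence with $\mathcal{L}(\pi)(i)=|\{j: j<i,\ \pi(j)>\pi(i)\}|$ for $i\in[n]$. *)

theory Defs
  imports "HOL-Combinatorics.Permutations"
begin

definition lehmer :: "nat \<Rightarrow> (nat \<Rightarrow> nat) \<Rightarrow> nat \<Rightarrow> nat" where
  "lehmer n \<pi> i = card {j \<in> {1..n}. j < i \<and> \<pi> j > \<pi> i}"

end

theory Submission
  imports Defs
begin

text \<open>Lowering the values of \<sigma> at a set S of positions by one preserves every comparison
  \<sigma> j > \<sigma> i, except when j \<in> S and \<sigma> j = \<sigma> i + 1: then the two values of \<sigma>e coincide.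
  This needs only that no two values at positions of S are adjacent, which the spacing
  hypothesis on the \<sigma>(i_j) guarantees. Hence the Lehmer code drops by one at i exactly when
  the position p with \<sigma> p = \<sigma> i + 1 lies in S and precedes i.\<close>

lemma decrement_less_iff:
  fixes \<sigma> :: "'a \<Rightarrow> nat"
  assumes "\<sigma> x \<noteq> \<sigma> y" and "x \<in> S \<Longrightarrow> y \<in> S \<Longrightarrow> \<sigma> x \<noteq> \<sigma> y + 1"
  shows "(if y \<in> S then \<sigma> y - 1 else \<sigma> y) < (if x \<in> S then \<sigma> x - 1 else \<sigma> x) \<longleftrightarrow>
           \<sigma> y < \<sigma> x \<and> \<not> (x \<in> S \<and> \<sigma> x = \<sigma> y + 1)"
  using assms by auto

lemma lehmer_decrement_non_adjacent:
  fixes \<sigma> :: "nat \<Rightarrow> nat"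
  assumes inj: "inj_on \<sigma> {1..n}" and i: "i \<in> {1..n}" and S: "S \<subseteq> {1..n}"
    and non_adjacent: "\<And>x y. x \<in> S \<Longrightarrow> y \<in> S \<Longrightarrow> \<sigma> x \<noteq> \<sigma> y + 1"
    and \<sigma>e: "\<And>z. \<sigma>e z = (if z \<in> S then \<sigma> z - 1 else \<sigma> z)"
  shows "lehmer n \<sigma>e i =
           (if \<exists>p\<in>S. p < i \<and> \<sigma> p = \<sigma> i + 1 then lehmer n \<sigma> i - 1 else lehmer n \<sigma> i)"
proof -
  define A where "A = {j \<in> {1..n}. j < i \<and> \<sigma> i < \<sigma> j}"
  define R where "R = {p \<in> S. \<sigma> p = \<sigma> i + 1}"
  have less_iff: "\<sigma>e i < \<sigma>e j \<longleftrightarrow> \<sigma> i < \<sigma> j \<and> j \<notin> R" if "j \<in> {1..n}" "j < i" for j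
  proof -
    have "\<sigma> j \<noteq> \<sigma> i" using inj i that by (auto dest: inj_onD)
    then show ?thesis
      using decrement_less_iff[of \<sigma> j i S] non_adjacent \<sigma>e unfolding R_def by auto
  qed
  have "{j \<in> {1..n}. j < i \<and> \<sigma>e i < \<sigma>e j} = A - R"
    unfolding A_def using less_iff by auto
  then have "lehmer n \<sigma>e i = card (A - R)"
    unfolding lehmer_def by simp
  also have "\<dots> = card A - card (A \<inter> R)"
    by (rule card_Diff_subset_Int) (simp add: A_def)
  finally have lehmer_eq: "lehmer n \<sigma>e i = card A - card (A \<inter> R)" .
  have lehmer_A: "lehmer n \<sigma> i = card A"
    unfolding lehmer_def A_def ..
  show ?thesis
  proof (cases "\<exists>p\<in>S. p < i \<and> \<sigma> p = \<sigma> i + 1")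
    case True
    then obtain p where p: "p \<in> S" "p < i" "\<sigma> p = \<sigma> i + 1" by blast
    have "p \<in> {1..n}" using p S by blast
    then have "A \<inter> R = {p}"
      using p inj unfolding A_def R_def by (auto intro: inj_onD[OF inj])
    then show ?thesis using True lehmer_eq lehmer_A by simp
  next
    case False
    then have "A \<inter> R = {}" unfolding A_def R_def by auto
    then show ?thesis using False lehmer_eq lehmer_A by auto
  qed
qed

lemma add_le_of_Suc_gaps:
  fixes f :: "nat \<Rightarrow> nat"
  assumes gap: "\<And>j. lo \<le> j \<Longrightarrow> Suc j \<le> hi \<Longrightarrow> f j + k \<le> f (Suc j)"
    and "lo \<le> a" "a < b" "b \<le> hi"
  shows "f a + k \<le> f b"
proof -
  have "Suc a \<le> b" using \<open>a < b\<close> by simp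
  then show ?thesis
  proof (induction b rule: dec_induct)
    case base
    show ?case using gap assms(2,3,4) by simp
  next
    case (step c)
    then have "f a + k \<le> f c" by simp
    also have "\<dots> \<le> f c + k" by simp
    also have "\<dots> \<le> f (Suc c)" using gap assms(2) step.hyps \<open>b \<le> hi\<close> by simp
    finally show ?case .
  qed
qed

lemma non_adjacent_of_gaps:
  fixes f :: "nat \<Rightarrow> nat"
  assumes gap: "\<And>j. 1 \<le> j \<Longrightarrow> Suc j \<le> l \<Longrightarrow> f j + 2 \<le> f (Suc j)"
    and "a \<in> {1..l}" "b \<in> {1..l}"
  shows "f a \<noteq> f b + 1"
proof -
  note spread = add_le_of_Suc_gaps[where f = f and lo = 1 and hi = l, OF gap]
  consider "a = b" | "a < b" | "b < a" by linarith
  then show ?thesis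
  proof cases
    case 2
    then have "f a + 2 \<le> f b" using spread assms(2,3) by simp
    then show ?thesis by simp
  next
    case 3
    then have "f b + 2 \<le> f a" using spread assms(2,3) by simp
    then show ?thesis by simp
  qed simp
qed

lemma permutes_eq_inv_pred_iff:
  fixes \<sigma> :: "nat \<Rightarrow> nat"
  assumes "\<sigma> permutes A" and "0 < \<sigma> p"
  shows "i = inv \<sigma> (\<sigma> p - 1) \<longleftrightarrow> \<sigma> p = \<sigma> i + 1"
proof -
  have "i = inv \<sigma> (\<sigma> p - 1) \<longleftrightarrow> \<sigma> i = \<sigma> p - 1"
    using permutes_inv_eq[OF assms(1)] by (metis eq_commute)
  then show ?thesis using assms(2) by auto
qed

theorem lemma1:
  fixes n m t l :: nat and \<sigma> \<sigma>e :: "nat \<Rightarrow> nat" and I :: "nat \<Rightarrow> nat"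
  assumes "n > 0" "m > 0" "t > 0" "l > 0" "l \<le> t"
    and "\<sigma> permutes {1..n}"
    and "inj_on I {1..l}" "I ` {1..l} \<subseteq> {1..n}"
    and "\<forall>j\<in>{1..l}. \<sigma> (I j) > m"
    and "\<forall>j\<in>{1..l-1}. \<sigma> (I j) \<le> \<sigma> (I (j+1)) - 2"
    and "\<forall>i. \<sigma>e i = (if i \<in> I ` {1..l} then \<sigma> i - 1 else \<sigma> i)"
  shows "\<forall>i\<in>{1..n}. lehmer n \<sigma>e i =
           (if \<exists>j\<in>{1..l}. i = inv \<sigma> (\<sigma> (I j) - 1) \<and> inv \<sigma> (\<sigma> (I j) - 1) > I j
            then lehmer n \<sigma> i - 1 else lehmer n \<sigma> i)"
proof
  fix i assume i: "i \<in> {1..n}"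
  have "\<sigma> (I j) + 2 \<le> \<sigma> (I (Suc j))" if "1 \<le> j" "Suc j \<le> l" for j
  proof -
    have "\<sigma> (I j) \<le> \<sigma> (I (Suc j)) - 2" and "m < \<sigma> (I j)"
      using that assms(9,10) by simp_all
    then show ?thesis by simp \<comment> \<open>positivity excludes a truncated subtraction\<close>
  qed
  then have "\<sigma> x \<noteq> \<sigma> y + 1" if "x \<in> I ` {1..l}" "y \<in> I ` {1..l}" for x y
    using that non_adjacent_of_gaps[of l "\<sigma> \<circ> I"] by auto
  then have lehmer_eq: "lehmer n \<sigma>e i =
      (if \<exists>p\<in>I ` {1..l}. p < i \<and> \<sigma> p = \<sigma> i + 1 then lehmer n \<sigma> i - 1 else lehmer n \<sigma> i)"
    using lehmer_decrement_non_adjacent[OF permutes_inj_on[OF assms(6)] i assms(8)] assms(11)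
    by blast
  have "i = inv \<sigma> (\<sigma> (I j) - 1) \<and> inv \<sigma> (\<sigma> (I j) - 1) > I j \<longleftrightarrow> I j < i \<and> \<sigma> (I j) = \<sigma> i + 1"
    if "j \<in> {1..l}" for j
    using that assms(9) permutes_eq_inv_pred_iff[OF assms(6), of "I j" i] by fastforce
  then have condition_iff: "(\<exists>j\<in>{1..l}. i = inv \<sigma> (\<sigma> (I j) - 1) \<and> inv \<sigma> (\<sigma> (I j) - 1) > I j) \<longleftrightarrow>
      (\<exists>p\<in>I ` {1..l}. p < i \<and> \<sigma> p = \<sigma> i + 1)"
    by auto
  show "lehmer n \<sigma>e i =
      (if \<exists>j\<in>{1..l}. i = inv \<sigma> (\<sigma> (I j) - 1) \<and> inv \<sigma> (\<sigma> (I j) - 1) > I j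
       then lehmer n \<sigma> i - 1 else lehmer n \<sigma> i)"
    unfolding condition_iff by (rule lehmer_eq)
qed

end
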